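(* Let $G$ be an edge-transitive graph with an odd number of edges. Then there are no two distinct edges $\{a,b\}\neq\{c,d\}$ of $G$ such that there is perfect state transfer between $e_a-e_b$ and $e_c-e_d$.
   Context: With $L=\Delta-A$ the Laplacian of $G$ and $U(t)=\exp(itL)$, there is perfect state transfer between $e_a-e_b$ and $e_c-e_d$ if $U(t)(e_a-e_b)=\gamma(e_c-e_d)$ for some $t\ge0$ and $\gamma\in\mathbb{C}$, $|\gamma|=1$; $e_v$ is the standard basis vector of $v$. *)

theory Defs
  imports "HOL-Analysis.Analysis"
begin

definition simple_graph :: "('v \<Rightarrow> 'v \<Rightarrow> bool) \<Rightarrow> bool" where
  "simple_graph E \<longleftrightarrow> (\<forall>x y. E x y \<longrightarrow> E y x) \<and> (\<forall>x. \<not> E x x)"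

definition edges :: "('v \<Rightarrow> 'v \<Rightarrow> bool) \<Rightarrow> 'v set set" where
  "edges E = {{a, b} | a b. E a b}"

definition graph_automorphism :: "('v \<Rightarrow> 'v \<Rightarrow> bool) \<Rightarrow> ('v \<Rightarrow> 'v) \<Rightarrow> bool" where
  "graph_automorphism E \<sigma> \<longleftrightarrow> bij \<sigma> \<and> (\<forall>x y. E (\<sigma> x) (\<sigma> y) \<longleftrightarrow> E x y)"

definition edge_transitive :: "('v \<Rightarrow> 'v \<Rightarrow> bool) \<Rightarrow> bool" where
  "edge_transitive E \<longleftrightarrow>
     (\<forall>e\<in>edges E. \<forall>f\<in>edges E. \<exists>\<sigma>. graph_automorphism E \<sigma> \<and> \<sigma> ` e = f)"

definition degree :: "('v \<Rightarrow> 'v \<Rightarrow> bool) \<Rightarrow> 'v \<Rightarrow> nat" where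
  "degree E x = card {y. E x y}"

definition laplacian :: "('v::finite \<Rightarrow> 'v \<Rightarrow> bool) \<Rightarrow> complex^'v^'v" where
  "laplacian E = (\<chi> i j. (if i = j then of_nat (degree E i) else 0) - (if E i j then 1 else 0))"

text \<open>Action of U(t) = exp(i t L) on a vector, via the exponential power series.\<close>
definition transition :: "('v::finite \<Rightarrow> 'v \<Rightarrow> bool) \<Rightarrow> real \<Rightarrow> complex^'v \<Rightarrow> complex^'v" where
  "transition E t x = (\<Sum>k. ((\<i> * of_real t) ^ k / of_nat (fact k)) *s ((((*v) (laplacian E)) ^^ k) x))"

definition std_basis :: "'v::finite \<Rightarrow> complex^'v" where
  "std_basis v = (\<chi> i. if i = v then 1 else 0)"

definition pst :: "('v::finite \<Rightarrow> 'v \<Rightarrow> bool) \<Rightarrow> complex^'v \<Rightarrow> complex^'v \<Rightarrow> bool" where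
  "pst E x y \<longleftrightarrow> (\<exists>t\<ge>0. \<exists>\<gamma>. cmod \<gamma> = 1 \<and> transition E t x = \<gamma> *s y)"

end

theory Submission
  imports Defs "HOL-Library.Z2" "HOL-Library.Disjoint_Sets"
begin

(* If U(t) sends e_a - e_b to \<gamma>(e_c - e_d), then it also sends e_c - e_d to \<gamma>(e_a - e_b):
   the Laplacian is real, so U(-t) is the entrywise conjugate of U(t) and also its inverse.
   Graph automorphisms commute with U(t), and a vector e_p - e_q determines the edge {p, q}, so
   perfect state transfer pairs each edge with at most one partner edge; by edge transitivity
   every edge has a partner, different from itself. The pairing is a fixed-point-free
   involution on the edges, hence their number is even. *)

lemma even_card_perfect_matching:
  assumes total: "\<And>x. x \<in> S \<Longrightarrow> \<exists>y\<in>S. y \<noteq> x \<and> R x y"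
    and sym: "\<And>x y. R x y \<Longrightarrow> R y x"
    and unique: "\<And>x y y'. R x y \<Longrightarrow> R x y' \<Longrightarrow> y = y'"
  shows "even (card S)"
proof -
  define h where "h x = (SOME y. y \<in> S \<and> y \<noteq> x \<and> R x y)" for x
  have h: "h x \<in> S" "h x \<noteq> x" "R x (h x)" if "x \<in> S" for x
    using someI_ex[OF total[OF that, unfolded Bex_def]] by (simp_all add: h_def)
  have "h (h x) = x" if "x \<in> S" for x
    using unique[OF h(3)[OF h(1)[OF that]] sym[OF h(3)[OF that]]] .
  then have "(\<Sum>x\<in>S. 1 :: bit) = 0" \<comment> \<open>counting modulo 2, the summands cancel in pairs\<close>
    using h by (intro sum_involution_eq_0[where h = h]) simp_all
  then have "of_nat (card S) = (0 :: bit)"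
    by simp
  then show ?thesis
    by (metis even_of_nat_iff even_zero)
qed

fun matpow :: "'a::semiring_1^'n::finite^'n \<Rightarrow> nat \<Rightarrow> 'a^'n^'n" where
  "matpow M 0 = mat 1"
| "matpow M (Suc k) = M ** matpow M k"

lemma matpow_add: "matpow M (j + k) = matpow M j ** matpow M k"
  by (induction j) (simp_all add: matrix_mul_assoc)

lemma funpow_matrix_vector_mult: "(((*v) M) ^^ k) x = matpow M k *v x"
  by (induction k) (simp_all add: matrix_vector_mul_assoc)

lemma norm_matpow_le:
  fixes M :: "'a::real_normed_algebra_1^'n::finite^'n"
  shows "norm (matpow M k $ i $ j) \<le> (\<Sum>i\<in>UNIV. \<Sum>j\<in>UNIV. norm (M $ i $ j)) ^ k"
proof (induction k arbitrary: i j)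
  case 0
  show ?case by (simp add: mat_def)
next
  case (Suc k)
  define B where "B = (\<Sum>i\<in>UNIV. \<Sum>j\<in>UNIV. norm (M $ i $ j))"
  have "norm (matpow M (Suc k) $ i $ j) \<le> (\<Sum>l\<in>UNIV. norm (M $ i $ l) * norm (matpow M k $ l $ j))"
    by (simp add: matrix_matrix_mult_def norm_sum norm_mult_ineq sum_norm_le)
  also have "\<dots> \<le> (\<Sum>l\<in>UNIV. norm (M $ i $ l)) * B ^ k"
    unfolding sum_distrib_right B_def by (intro sum_mono mult_left_mono Suc.IH) simp
  also have "\<dots> \<le> B * B ^ k"
    unfolding B_def
    by (intro mult_right_mono member_le_sum[where f = "\<lambda>i. \<Sum>l\<in>UNIV. norm (M $ i $ l)"])
       (simp_all add: sum_nonneg)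
  finally show ?case by (simp add: B_def)
qed

lemma Reals_matpow: "(\<And>i j. M $ i $ j \<in> \<real>) \<Longrightarrow> matpow M k $ i $ j \<in> \<real>"
  by (induction k arbitrary: i j) (simp_all add: mat_def matrix_matrix_mult_def)

lemma matpow_permute:
  assumes "bij \<rho>" "\<And>i j. M $ \<rho> i $ \<rho> j = M $ i $ j"
  shows "matpow M k $ \<rho> i $ \<rho> j = matpow M k $ i $ j"
proof (induction k arbitrary: i j)
  case 0
  show ?case using bij_is_inj[OF assms(1)] by (simp add: mat_def inj_eq)
next
  case (Suc k)
  have "matpow M (Suc k) $ \<rho> i $ \<rho> j = (\<Sum>l\<in>UNIV. M $ \<rho> i $ \<rho> l * matpow M k $ \<rho> l $ \<rho> j)"
    unfolding matpow.simps matrix_matrix_mult_def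
    by (simp add: sum.reindex_bij_betw[OF assms(1), where g = "\<lambda>l. M $ \<rho> i $ l * matpow M k $ l $ \<rho> j"])
  also have "\<dots> = matpow M (Suc k) $ i $ j"
    by (simp add: assms(2) Suc.IH matrix_matrix_mult_def)
  finally show ?case .
qed

definition matrix_exp :: "complex \<Rightarrow> complex^'n::finite^'n \<Rightarrow> complex^'n^'n" where
  "matrix_exp z M = (\<chi> i j. \<Sum>k. z ^ k / fact k * matpow M k $ i $ j)"

lemma summable_matrix_exp_entry:
  fixes z :: complex
  shows "summable (\<lambda>k. norm (z ^ k / fact k * matpow M k $ i $ j))"
proof (rule summable_comparison_test')
  define B where "B = (\<Sum>i\<in>UNIV. \<Sum>j\<in>UNIV. norm (M $ i $ j))"
  show "summable (\<lambda>k. (norm z * B) ^ k /\<^sub>R fact k)"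
    by (rule summable_exp_generic)
  fix k
  have "norm (z ^ k / fact k * matpow M k $ i $ j) = norm z ^ k / fact k * norm (matpow M k $ i $ j)"
    unfolding norm_mult norm_divide norm_power norm_fact by simp
  also have "\<dots> \<le> norm z ^ k / fact k * B ^ k"
    unfolding B_def by (intro mult_left_mono norm_matpow_le) simp
  finally show "norm (norm (z ^ k / fact k * matpow M k $ i $ j)) \<le> (norm z * B) ^ k /\<^sub>R fact k"
    by (simp add: power_mult_distrib divide_inverse mult_ac)
qed

lemma matrix_exp_sums:
  fixes z :: complex
  shows "(\<lambda>k. z ^ k / fact k * matpow M k $ i $ j) sums matrix_exp z M $ i $ j"
  unfolding matrix_exp_def vec_lambda_beta
  by (rule summable_sums, rule summable_norm_cancel, rule summable_matrix_exp_entry)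

lemma matrix_exp_zero: "matrix_exp 0 M = mat 1"
proof -
  have "(\<lambda>k. 0 ^ k / fact k * matpow M k $ i $ j) = (\<lambda>k. if k = 0 then mat 1 $ i $ j else 0)" for i j
    by (simp add: fun_eq_iff)
  then have "(\<lambda>k. 0 ^ k / fact k * matpow M k $ i $ j) sums (mat 1 $ i $ j)" for i j
    using sums_single[of 0 "\<lambda>_. mat 1 $ i $ j"] by simp
  then show ?thesis
    unfolding vec_eq_iff using sums_unique2[OF matrix_exp_sums] by blast
qed

lemma matrix_exp_add: "matrix_exp z M ** matrix_exp w M = matrix_exp (z + w) M"
proof -
  let ?a = "\<lambda>i l k. z ^ k / fact k * matpow M k $ i $ l"
  let ?b = "\<lambda>l j k. w ^ k / fact k * matpow M k $ l $ j"
  have product_sums: "(\<lambda>n. \<Sum>l\<in>UNIV. \<Sum>k\<le>n. ?a i l k * ?b l j (n - k))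
          sums (matrix_exp z M ** matrix_exp w M) $ i $ j" for i j
    unfolding matrix_matrix_mult_def vec_lambda_beta
  proof (intro sums_sum)
    fix l
    show "(\<lambda>n. \<Sum>k\<le>n. ?a i l k * ?b l j (n - k)) sums (matrix_exp z M $ i $ l * matrix_exp w M $ l $ j)"
      using Cauchy_product_sums[OF summable_matrix_exp_entry summable_matrix_exp_entry]
      by (simp only: sums_unique[OF matrix_exp_sums])
  qed
  have Cauchy_coeff: "(\<Sum>l\<in>UNIV. \<Sum>k\<le>n. ?a i l k * ?b l j (n - k)) = (z + w) ^ n / fact n * matpow M n $ i $ j" for i j n
  proof -
    have "(\<Sum>l\<in>UNIV. \<Sum>k\<le>n. ?a i l k * ?b l j (n - k))
        = (\<Sum>k\<le>n. z ^ k / fact k * (w ^ (n - k) / fact (n - k)) * (matpow M k ** matpow M (n - k)) $ i $ j)"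
      unfolding matrix_matrix_mult_def vec_lambda_beta sum_distrib_left
      by (subst sum.swap) (simp add: mult_ac)
    also have "\<dots> = (\<Sum>k\<le>n. z ^ k / fact k * (w ^ (n - k) / fact (n - k))) * matpow M n $ i $ j"
      by (simp add: sum_distrib_right flip: matpow_add)
    also have "\<dots> = (z + w) ^ n / fact n * matpow M n $ i $ j"
      using exp_series_add_commuting[of z w n] by (simp add: divide_inverse scaleR_conv_of_real mult_ac)
    finally show ?thesis .
  qed
  have "(\<lambda>n. (z + w) ^ n / fact n * matpow M n $ i $ j) sums (matrix_exp z M ** matrix_exp w M) $ i $ j"
    for i j
    using product_sums unfolding Cauchy_coeff .
  then show ?thesis
    unfolding vec_eq_iff using sums_unique2[OF _ matrix_exp_sums] by blast
qed

lemma matrix_exp_cnj: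
  assumes "\<And>i j. M $ i $ j \<in> \<real>"
  shows "matrix_exp (cnj z) M $ i $ j = cnj (matrix_exp z M $ i $ j)"
proof -
  have "cnj (matpow M k $ i $ j) = matpow M k $ i $ j" for k
    using Reals_matpow[OF assms] by (simp add: Reals_cnj_iff)
  then have "(\<lambda>k. cnj (z ^ k / fact k * matpow M k $ i $ j)) = (\<lambda>k. cnj z ^ k / fact k * matpow M k $ i $ j)"
    by simp
  moreover have "(\<lambda>k. cnj (z ^ k / fact k * matpow M k $ i $ j)) sums cnj (matrix_exp z M $ i $ j)"
    by (rule sums_cnj[THEN iffD2], rule matrix_exp_sums)
  ultimately show ?thesis
    using sums_unique2[OF matrix_exp_sums] by simp
qed

lemma matrix_exp_permute:
  assumes "bij \<rho>" "\<And>i j. M $ \<rho> i $ \<rho> j = M $ i $ j"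
  shows "matrix_exp z M $ \<rho> i $ \<rho> j = matrix_exp z M $ i $ j"
  by (simp add: matrix_exp_def matpow_permute[OF assms])

lemma suminf_funpow_eq_matrix_exp:
  "(\<Sum>k. (z ^ k / fact k) *s (((*v) M ^^ k) x)) = matrix_exp z M *v x"
proof -
  have "(\<lambda>k. ((z ^ k / fact k) *s (matpow M k *v x)) $ i) sums (matrix_exp z M *v x) $ i" for i
  proof -
    have "(\<lambda>k. \<Sum>j\<in>UNIV. z ^ k / fact k * matpow M k $ i $ j * x $ j)
            sums (\<Sum>j\<in>UNIV. matrix_exp z M $ i $ j * x $ j)"
      by (intro sums_sum sums_mult2 matrix_exp_sums)
    then show ?thesis
      by (simp add: matrix_vector_mult_def sum_distrib_left mult.assoc)
  qed
  then have "(\<lambda>k. (z ^ k / fact k) *s (matpow M k *v x)) sums (matrix_exp z M *v x)"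
    unfolding sums_def by (intro vec_tendstoI) (simp add: sum_component)
  then show ?thesis
    unfolding funpow_matrix_vector_mult by (rule sums_unique[symmetric])
qed

lemma matrix_exp_state_transfer_sym:
  assumes M: "\<And>i j. M $ i $ j \<in> \<real>" and x: "\<And>i. x $ i \<in> \<real>" and y: "\<And>i. y $ i \<in> \<real>"
    and "cmod \<gamma> = 1"
    and transfer: "matrix_exp (\<i> * of_real t) M *v x = \<gamma> *s y"
  shows "matrix_exp (\<i> * of_real t) M *v y = \<gamma> *s x"
proof -
  let ?U = "matrix_exp (\<i> * of_real t) M" and ?V = "matrix_exp (- (\<i> * of_real t)) M"
  have "(?V *v x) $ i = cnj ((?U *v x) $ i)" for i
    using matrix_exp_cnj[OF M, of "\<i> * of_real t"] x
    by (simp add: matrix_vector_mult_def Reals_cnj_iff)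
  then have "?V *v x = cnj \<gamma> *s y"
    using y by (simp add: transfer vec_eq_iff Reals_cnj_iff)
  moreover have "?U ** ?V = mat 1"
    by (simp add: matrix_exp_add matrix_exp_zero)
  ultimately have "x = cnj \<gamma> *s (?U *v y)"
    by (metis matrix_vector_mul_assoc matrix_vector_mul_lid vec.scale)
  then have "\<gamma> *s x = (\<gamma> * cnj \<gamma>) *s (?U *v y)"
    by (simp add: vector_smult_assoc)
  also have "\<gamma> * cnj \<gamma> = 1"
    using \<open>cmod \<gamma> = 1\<close> complex_norm_square[of \<gamma>] by simp
  finally show ?thesis by simp
qed

definition edge_vec :: "'v::finite \<Rightarrow> 'v \<Rightarrow> complex^'v" where
  "edge_vec a b = std_basis a - std_basis b"

lemma edge_vec_nth: "edge_vec a b $ i = (if i = a then 1 else 0) - (if i = b then 1 else 0)"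
  by (simp add: edge_vec_def std_basis_def)

lemma Reals_edge_vec: "edge_vec a b $ i \<in> \<real>"
  by (simp add: edge_vec_nth)

lemma matrix_vector_mult_std_basis: "(U *v std_basis a) $ i = U $ i $ a"
proof -
  have "(U *v std_basis a) $ i = (\<Sum>j\<in>UNIV. if j = a then U $ i $ j else 0)"
    unfolding std_basis_def matrix_vector_mult_def vec_lambda_beta by (intro sum.cong) auto
  then show ?thesis
    by simp
qed

lemma matrix_vector_mult_edge_vec: "(U *v edge_vec a b) $ i = U $ i $ a - U $ i $ b"
  by (simp add: edge_vec_def vec.diff matrix_vector_mult_std_basis)

lemma edge_vec_parallel_iff:
  assumes "a \<noteq> b" "c \<noteq> d"
  shows "(\<exists>s. edge_vec a b = s *s edge_vec c d) \<longleftrightarrow> {a, b} = {c, d}"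
proof
  assume "\<exists>s. edge_vec a b = s *s edge_vec c d"
  then obtain s where "\<And>i. edge_vec a b $ i = s * edge_vec c d $ i"
    by (metis vector_smult_component)
  from this[of a] this[of b] have "a \<in> {c, d}" "b \<in> {c, d}"
    using assms(1) by (auto simp: edge_vec_nth split: if_splits)
  then show "{a, b} = {c, d}"
    using assms by auto
next
  assume "{a, b} = {c, d}"
  then have "edge_vec a b = 1 *s edge_vec c d \<or> edge_vec a b = (- 1) *s edge_vec c d"
    by (auto simp: doubleton_eq_iff vec_eq_iff edge_vec_nth)
  then show "\<exists>s. edge_vec a b = s *s edge_vec c d"
    by blast
qed

lemma edge_vec_transfer_permute:
  assumes "bij \<rho>" "\<And>i j. U $ \<rho> i $ \<rho> j = U $ i $ j"
    and "U *v edge_vec a b = \<gamma> *s edge_vec c d"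
  shows "U *v edge_vec (\<rho> a) (\<rho> b) = \<gamma> *s edge_vec (\<rho> c) (\<rho> d)"
proof -
  have "(U *v edge_vec (\<rho> a) (\<rho> b)) $ \<rho> i = (\<gamma> *s edge_vec (\<rho> c) (\<rho> d)) $ \<rho> i" for i
  proof -
    have "(U *v edge_vec (\<rho> a) (\<rho> b)) $ \<rho> i = (U *v edge_vec a b) $ i"
      by (simp add: matrix_vector_mult_edge_vec assms(2))
    also have "\<dots> = (\<gamma> *s edge_vec (\<rho> c) (\<rho> d)) $ \<rho> i"
      using bij_is_inj[OF assms(1)] by (simp add: assms(3) edge_vec_nth inj_eq)
    finally show ?thesis .
  qed
  then show ?thesis
    using bij_is_surj[OF assms(1)] by (metis surj_f_inv_f vec_eq_iff)
qed

definition transfers_to :: "complex^'v::finite^'v \<Rightarrow> 'v set \<Rightarrow> 'v set \<Rightarrow> bool" where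
  "transfers_to U e f \<longleftrightarrow>
     (\<exists>a b c d \<gamma>. e = {a, b} \<and> f = {c, d} \<and> a \<noteq> b \<and> c \<noteq> d \<and> cmod \<gamma> = 1 \<and>
        U *v edge_vec a b = \<gamma> *s edge_vec c d)"

lemma transfers_to_unique:
  assumes "transfers_to U e f" "transfers_to U e f'"
  shows "f = f'"
proof -
  obtain a b c d \<gamma> where e: "e = {a, b}" "a \<noteq> b" and f: "f = {c, d}" "c \<noteq> d"
    and "cmod \<gamma> = 1" and ab: "U *v edge_vec a b = \<gamma> *s edge_vec c d"
    using assms(1) unfolding transfers_to_def by blast
  obtain a' b' c' d' \<gamma>' where e': "e = {a', b'}" "a' \<noteq> b'" and f': "f' = {c', d'}" "c' \<noteq> d'"
    and ab': "U *v edge_vec a' b' = \<gamma>' *s edge_vec c' d'"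
    using assms(2) unfolding transfers_to_def by blast
  obtain s where "edge_vec a b = s *s edge_vec a' b'"
    using edge_vec_parallel_iff[OF e(2) e'(2)] e e' by blast
  then have "\<gamma> *s edge_vec c d = (s * \<gamma>') *s edge_vec c' d'"
    by (simp add: ab ab' vec.scale vector_smult_assoc flip: ab)
  then have "inverse \<gamma> *s (\<gamma> *s edge_vec c d) = inverse \<gamma> *s ((s * \<gamma>') *s edge_vec c' d')"
    by simp
  moreover have "\<gamma> \<noteq> 0"
    using \<open>cmod \<gamma> = 1\<close> by auto
  ultimately have "edge_vec c d = (inverse \<gamma> * s * \<gamma>') *s edge_vec c' d'"
    by (simp add: vector_smult_assoc mult.assoc)
  then show ?thesis
    using edge_vec_parallel_iff[OF f(2) f'(2)] f f' by blast
qed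

lemma transfers_to_sym:
  assumes "\<And>i j. M $ i $ j \<in> \<real>" "transfers_to (matrix_exp (\<i> * of_real t) M) e f"
  shows "transfers_to (matrix_exp (\<i> * of_real t) M) f e"
proof -
  obtain a b c d \<gamma> where "e = {a, b}" "f = {c, d}" "a \<noteq> b" "c \<noteq> d" "cmod \<gamma> = 1"
    and transfer: "matrix_exp (\<i> * of_real t) M *v edge_vec a b = \<gamma> *s edge_vec c d"
    using assms(2) unfolding transfers_to_def by blast
  moreover have "matrix_exp (\<i> * of_real t) M *v edge_vec c d = \<gamma> *s edge_vec a b"
    using \<open>cmod \<gamma> = 1\<close> transfer
    by (rule matrix_exp_state_transfer_sym[OF assms(1) Reals_edge_vec Reals_edge_vec])
  ultimately show ?thesis
    unfolding transfers_to_def by (intro exI[of _ c] exI[of _ d] exI[of _ a] exI[of _ b] exI[of _ \<gamma>]) simp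
qed

lemma transfers_to_permute:
  assumes "bij \<rho>" "\<And>i j. U $ \<rho> i $ \<rho> j = U $ i $ j" "transfers_to U e f"
  shows "transfers_to U (\<rho> ` e) (\<rho> ` f)"
proof -
  obtain a b c d \<gamma> where "e = {a, b}" "f = {c, d}" "a \<noteq> b" "c \<noteq> d" "cmod \<gamma> = 1"
    and transfer: "U *v edge_vec a b = \<gamma> *s edge_vec c d"
    using assms(3) unfolding transfers_to_def by blast
  moreover have "U *v edge_vec (\<rho> a) (\<rho> b) = \<gamma> *s edge_vec (\<rho> c) (\<rho> d)"
    using transfer by (rule edge_vec_transfer_permute[OF assms(1,2)])
  moreover have "\<rho> x \<noteq> \<rho> y" if "x \<noteq> y" for x y
    using bij_is_inj[OF assms(1)] that by (simp add: inj_eq)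
  ultimately show ?thesis
    unfolding transfers_to_def
    by (intro exI[of _ "\<rho> a"] exI[of _ "\<rho> b"] exI[of _ "\<rho> c"] exI[of _ "\<rho> d"] exI[of _ \<gamma>]) simp
qed

lemma graph_automorphism_edges:
  assumes "graph_automorphism E \<sigma>" "e \<in> edges E"
  shows "\<sigma> ` e \<in> edges E"
  using assms unfolding graph_automorphism_def edges_def by auto

lemma degree_graph_automorphism:
  assumes "graph_automorphism E \<sigma>"
  shows "degree E (\<sigma> x) = degree E x"
proof -
  have "bij \<sigma>" and neighbours: "{y. E x y} = \<sigma> -` {y. E (\<sigma> x) y}"
    using assms by (auto simp: graph_automorphism_def)
  then have "card (\<sigma> -` {y. E (\<sigma> x) y}) = card {y. E (\<sigma> x) y}"
    by (intro card_vimage_inj) (auto simp: bij_is_inj bij_is_surj)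
  then show ?thesis
    unfolding degree_def neighbours by (rule sym)
qed

lemma laplacian_graph_automorphism:
  assumes "graph_automorphism E \<sigma>"
  shows "laplacian E $ \<sigma> i $ \<sigma> j = laplacian E $ i $ j"
proof -
  have "\<sigma> i = \<sigma> j \<longleftrightarrow> i = j" "E (\<sigma> i) (\<sigma> j) \<longleftrightarrow> E i j"
    using assms by (simp_all add: graph_automorphism_def bij_is_inj inj_eq)
  then show ?thesis
    by (simp add: laplacian_def degree_graph_automorphism[OF assms])
qed

lemma Reals_laplacian: "laplacian E $ i $ j \<in> \<real>"
  by (simp add: laplacian_def)

lemma transition_eq_matrix_exp:
  "transition E t x = matrix_exp (\<i> * of_real t) (laplacian E) *v x"
  by (simp add: transition_def flip: suminf_funpow_eq_matrix_exp)

lemma transfers_to_graph_automorphism: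
  assumes "graph_automorphism E \<sigma>" "transfers_to (matrix_exp z (laplacian E)) e f"
  shows "transfers_to (matrix_exp z (laplacian E)) (\<sigma> ` e) (\<sigma> ` f)"
proof -
  have "bij \<sigma>"
    using assms(1) by (simp add: graph_automorphism_def)
  then show ?thesis
    using assms(2)
    by (intro transfers_to_permute matrix_exp_permute laplacian_graph_automorphism[OF assms(1)])
qed

lemma pst_edge_vec_transfers_to:
  assumes "simple_graph E" "E a b" "E c d"
    and "pst E (std_basis a - std_basis b) (std_basis c - std_basis d)"
  obtains t where "transfers_to (matrix_exp (\<i> * of_real t) (laplacian E)) {a, b} {c, d}"
proof -
  have "a \<noteq> b" "c \<noteq> d"
    using assms(1-3) unfolding simple_graph_def by blast+
  then show ?thesis
    using assms(4) that unfolding pst_def transition_eq_matrix_exp transfers_to_def edge_vec_def by blast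
qed

lemma edge_transitive_transfers_to_partner:
  assumes "edge_transitive E" "e\<^sub>0 \<in> edges E" "f\<^sub>0 \<in> edges E" "e\<^sub>0 \<noteq> f\<^sub>0"
    and transfer: "transfers_to (matrix_exp z (laplacian E)) e\<^sub>0 f\<^sub>0"
    and "e \<in> edges E"
  shows "\<exists>f\<in>edges E. f \<noteq> e \<and> transfers_to (matrix_exp z (laplacian E)) e f"
proof -
  obtain \<sigma> where \<sigma>: "graph_automorphism E \<sigma>" "\<sigma> ` e\<^sub>0 = e"
    using assms(1,2,6) unfolding edge_transitive_def by blast
  have "inj \<sigma>"
    using \<sigma>(1) by (simp add: graph_automorphism_def bij_is_inj)
  then have "\<sigma> ` f\<^sub>0 \<noteq> e"
    using \<open>e\<^sub>0 \<noteq> f\<^sub>0\<close> \<sigma>(2) by (metis inj_image_eq_iff)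
  moreover have "\<sigma> ` f\<^sub>0 \<in> edges E"
    using \<sigma>(1) \<open>f\<^sub>0 \<in> edges E\<close> by (rule graph_automorphism_edges)
  moreover have "transfers_to (matrix_exp z (laplacian E)) e (\<sigma> ` f\<^sub>0)"
    using transfers_to_graph_automorphism[OF \<sigma>(1) transfer] \<sigma>(2) by simp
  ultimately show ?thesis
    by blast
qed

theorem mainTheorem15:
  fixes E :: "'v::finite \<Rightarrow> 'v \<Rightarrow> bool"
  assumes "simple_graph E"
    and "edge_transitive E"
    and "odd (card (edges E))"
  shows "\<not> (\<exists>a b c d. E a b \<and> E c d \<and> {a, b} \<noteq> {c, d} \<and>
            pst E (std_basis a - std_basis b) (std_basis c - std_basis d))"
proof
  assume "\<exists>a b c d. E a b \<and> E c d \<and> {a, b} \<noteq> {c, d} \<and>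
            pst E (std_basis a - std_basis b) (std_basis c - std_basis d)"
  then obtain a b c d where ab: "E a b" and cd: "E c d" and distinct: "{a, b} \<noteq> {c, d}"
    and "pst E (std_basis a - std_basis b) (std_basis c - std_basis d)"
    by blast
  then obtain t where transfer: "transfers_to (matrix_exp (\<i> * of_real t) (laplacian E)) {a, b} {c, d}"
    using pst_edge_vec_transfers_to[OF assms(1) ab cd] by blast
  have edges: "{a, b} \<in> edges E" "{c, d} \<in> edges E"
    using ab cd unfolding edges_def by blast+
  have "even (card (edges E))"
    using edge_transitive_transfers_to_partner[OF assms(2) edges distinct transfer]
    by (rule even_card_perfect_matching[OF _ transfers_to_sym[OF Reals_laplacian] transfers_to_unique])
  with assms(3) show False
    by simp
qed

end
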